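(* Let $G=(S,T,\pi)$ be a countable two-person win-lose game such that the family $\mathcal{B}^2_{\downarrow}(G)$ is ascending-union closed. Then for every $\mathbf{p}\in\Delta(S)$ the infimum $\inf_{\mathbf{q}\in\Delta(T)}\pi^{\mathrm{mix}}(\mathbf{p},\mathbf{q})$ is attained, the infimum $\inf_{\mathbf{q}\in\Delta(T)}\sup_{\mathbf{p}\in\Delta(S)}\pi^{\mathrm{mix}}(\mathbf{p},\mathbf{q})$ is attained, and $$\sup_{\mathbf{p}\in\Delta(S)}\min_{\mathbf{q}\in\Delta(T)}\pi^{\mathrm{mix}}(\mathbf{p},\mathbf{q})=\min_{\mathbf{q}\in\Delta(T)}\sup_{\mathbf{p}\in\Delta(S)}\pi^{\mathrm{mix}}(\mathbf{p},\mathbf{q}).$$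
   Context: A two-person win-lose game is a triple $G=(S,T,\pi)$ where $S,T$ are non-empty sets and $\pi:S\times T\to\{0,1\}$. It is countable if $|S|=|T|=\aleph_0$. For a set $X$, $\Delta(X)$ denotes the set of probability distributions on $X$ with at most countable support. For $\mathbf{p}\in\Delta(S)$, $\mathbf{q}\in\Delta(T)$, $\pi^{\mathrm{mix}}(\mathbf{p},\mathbf{q})=\sum_{s,t}p_sq_t\pi(s,t)$. For $t\in T$ let $B_t=\{s\in S:\pi(s,t)=0\}$, let $\mathcal{B}^2(G)=\{B_t:t\in T\}$, and $\mathcal{B}^2_{\downarrow}(G)=\{A\subseteq S:\exists t\in T,\ A\subseteq B_t\}$. A family $\mathcal{F}$ of sets is ascending-union closed if whenever $A_i\in\mathcal{F}$ for $i=1,2,\ldots$ and $A_1\subset A_2\subset\cdots$, then $\bigcup_{i=1}^\infty A_i\in\mathcal{F}$. *)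

theory Defs
  imports "HOL-Probability.Probability"
begin

text \<open>Mixed strategies on X: probability distributions supported in X
  (pmfs always have countable support).\<close>
definition Delta :: "'a set \<Rightarrow> 'a pmf set" where
  "Delta X = {p. set_pmf p \<subseteq> X}"

text \<open>Mixed payoff: sum over S x T of p_s q_t pi(s,t), with pi valued in {0,1}
  (encoded as a boolean, 1 = True).\<close>
definition pi_mix :: "'a set \<Rightarrow> 'b set \<Rightarrow> ('a \<Rightarrow> 'b \<Rightarrow> bool) \<Rightarrow> 'a pmf \<Rightarrow> 'b pmf \<Rightarrow> real" where
  "pi_mix S T \<pi> p q = (\<Sum>\<^sub>\<infinity>(s,t)\<in>S \<times> T. pmf p s * pmf q t * of_bool (\<pi> s t))"

definition B_set :: "'a set \<Rightarrow> ('a \<Rightarrow> 'b \<Rightarrow> bool) \<Rightarrow> 'b \<Rightarrow> 'a set" where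
  "B_set S \<pi> t = {s \<in> S. \<not> \<pi> s t}"

definition B2_down :: "'a set \<Rightarrow> 'b set \<Rightarrow> ('a \<Rightarrow> 'b \<Rightarrow> bool) \<Rightarrow> 'a set set" where
  "B2_down S T \<pi> = {A. \<exists>t\<in>T. A \<subseteq> B_set S \<pi> t}"

definition ascending_union_closed :: "'a set set \<Rightarrow> bool" where
  "ascending_union_closed F \<longleftrightarrow>
     (\<forall>A :: nat \<Rightarrow> 'a set. (\<forall>i. A i \<in> F) \<and> (\<forall>i. A i \<subset> A (Suc i)) \<longrightarrow> (\<Union>i. A i) \<in> F)"

end

theory Submission
  imports Defs
begin

(* Enumerate S = {e 0, e 1, ...} and code a set A \<subseteq> S by the real number
   \<Sum>{2 / 3^(j+1) | e j \<in> A}; a pure strategy t of player 2 is represented by the code of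
   its losing set B_t. Ascending-union closedness makes the family of sets dominated by some
   B_t closed under pointwise limits, so its codes form a closed subset of [0, 1].
   For a sequence of mixed strategies of player 2, Helly's selection theorem gives a
   subsequence whose code distributions converge weakly; the limit lives on that closed set,
   which is covered by the closed code images of the families Pow B_t. Splitting the limit
   along this cover yields a mixed strategy q whose losing probability at every s is, by the
   portmanteau inequality for closed sets, at least the limsup of those of the subsequence.
   Applied to a minimising sequence this gives attainment of the infima; applied to strategies
   that are nearly optimal against the first n pure strategies of player 1 (which exist by the
   multiplicative weights method) it gives a strategy of player 2 guaranteeing the lower
   value, hence the minimax equality. *)

section \<open>Mixed payoffs\<close>

definition win_prob :: "('a \<Rightarrow> 'b \<Rightarrow> bool) \<Rightarrow> 'b pmf \<Rightarrow> 'a \<Rightarrow> real" where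
  "win_prob \<pi> q s = measure_pmf.prob q {t. \<pi> s t}"

lemma win_prob_nonneg: "0 \<le> win_prob \<pi> q s"
  by (simp add: win_prob_def)

lemma win_prob_le_1: "win_prob \<pi> q s \<le> 1"
  by (simp add: win_prob_def)

lemma win_prob_eq_1_minus_lose: "win_prob \<pi> q s = 1 - measure_pmf.prob q {t. \<not> \<pi> s t}"
  using measure_pmf.prob_compl[of "{t. \<not> \<pi> s t}" q] by (simp add: win_prob_def Collect_neg_eq)

lemma integrable_win_prob: "integrable (measure_pmf p) (win_prob \<pi> q)"
  by (rule measure_pmf.integrable_const_bound[where B=1]) (auto simp: win_prob_nonneg win_prob_le_1)

lemma pi_mix_eq_expectation:
  assumes "p \<in> Delta S" "q \<in> Delta T"
  shows "pi_mix S T \<pi> p q = measure_pmf.expectation p (win_prob \<pi> q)"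
proof -
  define g :: "'a \<times> 'b \<Rightarrow> real" where "g x = of_bool (\<pi> (fst x) (snd x))" for x
  define f where "f x = pmf (pair_pmf p q) x * g x" for x
  have "pi_mix S T \<pi> p q = infsum f (S \<times> T)"
    unfolding pi_mix_def by (intro infsum_cong) (auto simp: f_def g_def pmf_pair)
  also have "\<dots> = infsum f UNIV"
  proof (rule infsum_cong_neutral)
    fix x assume "x \<in> UNIV - S \<times> T"
    then have "x \<notin> set_pmf (pair_pmf p q)" using assms by (auto simp: Delta_def)
    then show "f x = 0" by (simp add: f_def pmf_eq_0_set_pmf)
  qed auto
  also have "\<dots> = infsetsum f UNIV"
    by (rule infsetsum_infsum[symmetric], rule abs_summable_on_comparison_test'[OF pmf_abs_summable])
       (auto simp: f_def g_def)
  also have "\<dots> = measure_pmf.expectation (pair_pmf p q) g"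
    unfolding f_def by (rule pmf_expectation_eq_infsetsum[symmetric])
  also have "\<dots> = enn2real (\<integral>\<^sup>+x. ennreal (g x) \<partial>pair_pmf p q)"
    by (subst integral_eq_nn_integral) (auto simp: g_def)
  also have "(\<integral>\<^sup>+x. ennreal (g x) \<partial>pair_pmf p q) = (\<integral>\<^sup>+s. \<integral>\<^sup>+t. ennreal (g (s, t)) \<partial>q \<partial>p)"
    by (rule nn_integral_pair_pmf')
  also have "\<dots> = (\<integral>\<^sup>+s. ennreal (win_prob \<pi> q s) \<partial>p)"
  proof (rule nn_integral_cong)
    fix s
    have "(\<integral>\<^sup>+t. ennreal (g (s, t)) \<partial>q) = (\<integral>\<^sup>+t. indicator {t. \<pi> s t} t \<partial>q)"
      by (rule nn_integral_cong) (auto simp: g_def indicator_def)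
    then show "(\<integral>\<^sup>+t. ennreal (g (s, t)) \<partial>q) = ennreal (win_prob \<pi> q s)"
      by (simp add: win_prob_def measure_pmf.emeasure_eq_measure)
  qed
  also have "\<dots> = ennreal (measure_pmf.expectation p (win_prob \<pi> q))"
    by (rule nn_integral_eq_integral[OF integrable_win_prob]) (auto simp: win_prob_nonneg)
  finally show ?thesis
    by (simp add: Bochner_Integration.integral_nonneg win_prob_nonneg)
qed

lemma pi_mix_nonneg: "p \<in> Delta S \<Longrightarrow> q \<in> Delta T \<Longrightarrow> 0 \<le> pi_mix S T \<pi> p q"
  by (simp add: pi_mix_eq_expectation Bochner_Integration.integral_nonneg win_prob_nonneg)

lemma pi_mix_le_1: "p \<in> Delta S \<Longrightarrow> q \<in> Delta T \<Longrightarrow> pi_mix S T \<pi> p q \<le> 1"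
  by (simp add: pi_mix_eq_expectation measure_pmf.integral_le_const integrable_win_prob win_prob_le_1)

lemma pi_mix_bdd_below: "p \<in> Delta S \<Longrightarrow> bdd_below ((\<lambda>q. pi_mix S T \<pi> p q) ` Delta T)"
  by (rule bdd_belowI[of _ 0]) (auto simp: pi_mix_nonneg)

lemma pi_mix_bdd_above: "q \<in> Delta T \<Longrightarrow> bdd_above ((\<lambda>p. pi_mix S T \<pi> p q) ` Delta S)"
  by (rule bdd_aboveI[of _ 1]) (auto simp: pi_mix_le_1)

lemma Delta_nonempty: "X \<noteq> {} \<Longrightarrow> Delta X \<noteq> {}"
  by (auto simp: Delta_def intro: exI[of _ "return_pmf _"])

lemma pi_mix_finite_support:
  assumes "p \<in> Delta S" "q \<in> Delta T" "finite F" "set_pmf p \<subseteq> F"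
  shows "pi_mix S T \<pi> p q = (\<Sum>s\<in>F. pmf p s * win_prob \<pi> q s)"
proof -
  have "pi_mix S T \<pi> p q = (\<Sum>s\<in>F. win_prob \<pi> q s * pmf p s)"
    unfolding pi_mix_eq_expectation[OF assms(1,2)]
    by (rule integral_measure_pmf_real[OF assms(3)]) (use assms(4) in blast)
  then show ?thesis
    by (simp add: mult.commute)
qed

lemma exists_pmf_with_weights:
  fixes F :: "'a set" and w :: "'a \<Rightarrow> real"
  assumes "finite F" "\<And>s. s \<in> F \<Longrightarrow> 0 \<le> w s" "(\<Sum>s\<in>F. w s) = 1"
  obtains P where "set_pmf P \<subseteq> F" "\<And>s. s \<in> F \<Longrightarrow> pmf P s = w s"
proof -
  define f where "f s = (if s \<in> F then w s else 0)" for s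
  have f_nonneg: "0 \<le> f s" for s
    using assms(2) by (auto simp: f_def)
  have "(\<integral>\<^sup>+s. ennreal (f s) \<partial>count_space UNIV) = (\<integral>\<^sup>+s. ennreal (f s) \<partial>count_space F)"
    by (rule nn_integral_count_space_eq) (auto simp: f_def)
  also have "\<dots> = ennreal (\<Sum>s\<in>F. f s)"
    using assms(1) f_nonneg by (simp add: nn_integral_count_space_finite sum_ennreal)
  also have "(\<Sum>s\<in>F. f s) = 1"
    using assms(3) by (simp add: f_def)
  finally have pmf_f: "pmf (embed_pmf f) s = f s" for s
    using f_nonneg by (intro pmf_embed_pmf) auto
  show ?thesis
  proof
    show "set_pmf (embed_pmf f) \<subseteq> F"
      by (auto simp: set_pmf_iff pmf_f f_def split: if_splits)
    show "pmf (embed_pmf f) s = w s" if "s \<in> F" for s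
      using that by (simp add: pmf_f f_def)
  qed
qed

lemma win_prob_uniform_mixture:
  fixes K :: nat
  assumes "K > 0"
  shows "win_prob \<pi> (bind_pmf (pmf_of_set {..<K}) qs) s = (\<Sum>k<K. win_prob \<pi> (qs k) s) / real K"
proof -
  have "ennreal (win_prob \<pi> (bind_pmf (pmf_of_set {..<K}) qs) s)
      = (\<Sum>k<K. emeasure (measure_pmf (qs k)) {t. \<pi> s t}) / of_nat K"
    using nn_integral_pmf_of_set[of "{..<K}"] assms
    by (simp add: win_prob_def lessThan_empty_iff measure_pmf.emeasure_eq_measure[symmetric])
  also have "\<dots> = ennreal ((\<Sum>k<K. win_prob \<pi> (qs k) s) / real K)"
    using assms
    by (simp add: win_prob_def measure_pmf.emeasure_eq_measure ennreal_of_nat_eq_real_of_nat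
                  sum_ennreal divide_ennreal sum_nonneg)
  finally show ?thesis
    by (subst (asm) ennreal_inj) (auto simp: win_prob_nonneg intro!: divide_nonneg_nonneg sum_nonneg)
qed

section \<open>Coding subsets of a countable set by reals\<close>

definition set_code :: "(nat \<Rightarrow> 'a) \<Rightarrow> 'a set \<Rightarrow> real" where
  "set_code e A = (\<Sum>j. if e j \<in> A then 2 / 3 ^ Suc j else 0)"

lemma ternary_tail_sums: "(\<lambda>j. if j < N then 0 else 2 / 3 ^ Suc j :: real) sums (1 / 3 ^ N)"
proof -
  have "(\<lambda>j. (2 / 3 ^ Suc N) * (1 / 3 :: real) ^ j) sums (1 / 3 ^ N)"
    using sums_mult[OF geometric_sums[of "1/3 :: real"], of "2 / 3 ^ Suc N"] by simp
  moreover have "(\<lambda>j. (2 / 3 ^ Suc N) * (1 / 3 :: real) ^ j) =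
      (\<lambda>j. if j + N < N then 0 else 2 / 3 ^ Suc (j + N))"
    by (simp add: fun_eq_iff power_add power_one_over field_simps)
  ultimately have "(\<lambda>j. if j + N < N then 0 else 2 / 3 ^ Suc (j + N) :: real) sums (1 / 3 ^ N)"
    by simp
  then show ?thesis
    by (subst (asm) sums_zero_iff_shift) auto
qed

lemma ternary_series_bound:
  fixes d :: "nat \<Rightarrow> real"
  assumes "\<And>j. \<bar>d j\<bar> \<le> 2 / 3 ^ Suc j" and "\<And>j. j < N \<Longrightarrow> d j = 0"
  shows "summable d" and "\<bar>suminf d\<bar> \<le> 1 / 3 ^ N"
proof -
  let ?b = "\<lambda>j. if j < N then 0 else 2 / 3 ^ Suc j :: real"
  have le: "\<bar>d j\<bar> \<le> ?b j" for j
    using assms by auto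
  have sb: "summable ?b"
    using ternary_tail_sums by (rule sums_summable)
  have sa: "summable (\<lambda>j. \<bar>d j\<bar>)"
    by (rule summable_comparison_test[OF _ sb]) (use le in auto)
  then show "summable d"
    by (rule summable_rabs_cancel)
  have "\<bar>suminf d\<bar> \<le> (\<Sum>j. \<bar>d j\<bar>)"
    by (rule summable_rabs[OF sa])
  also have "\<dots> \<le> suminf ?b"
    by (rule suminf_le[OF le sa sb])
  finally show "\<bar>suminf d\<bar> \<le> 1 / 3 ^ N"
    using ternary_tail_sums by (simp add: sums_iff)
qed

lemma set_code_diff:
  "set_code e A - set_code e A' =
     (\<Sum>j. (if e j \<in> A then 2 / 3 ^ Suc j else 0) - (if e j \<in> A' then 2 / 3 ^ Suc j else 0))"
proof -
  have summable: "summable (\<lambda>j. if e j \<in> B then 2 / 3 ^ Suc j else 0 :: real)" for B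
    by (rule ternary_series_bound(1)[of _ 0]) auto
  show ?thesis
    unfolding set_code_def by (rule suminf_diff[OF summable summable])
qed

lemma set_code_diff_le:
  assumes "\<And>j. j < N \<Longrightarrow> e j \<in> A \<longleftrightarrow> e j \<in> A'"
  shows "\<bar>set_code e A - set_code e A'\<bar> \<le> 1 / 3 ^ N"
  unfolding set_code_diff by (rule ternary_series_bound(2)) (use assms in auto)

lemma set_code_diff_ge:
  assumes "\<And>j. j < N \<Longrightarrow> e j \<in> A \<longleftrightarrow> e j \<in> A'" and "e N \<in> A" "e N \<notin> A'"
  shows "1 / 3 ^ Suc N \<le> set_code e A - set_code e A'"
proof -
  define d where
    "d j = (if e j \<in> A then 2 / 3 ^ Suc j else 0) - (if e j \<in> A' then 2 / 3 ^ Suc j else (0::real))" for j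
  define r where "r = d(N := 0)"
  have r: "summable r" "\<bar>suminf r\<bar> \<le> 1 / 3 ^ Suc N"
    by (rule ternary_series_bound; use assms(1) in \<open>force simp: r_def d_def less_Suc_eq\<close>)+
  have "(\<lambda>j. (if j = N then d N else 0) + r j) sums (d N + suminf r)"
    by (rule sums_add[OF sums_single summable_sums[OF r(1)]])
  moreover have "(\<lambda>j. (if j = N then d N else 0) + r j) = d"
    by (auto simp: r_def)
  ultimately have "d sums (d N + suminf r)"
    by simp
  moreover have "d N = 2 / 3 ^ Suc N"
    using assms by (simp add: d_def)
  ultimately have "set_code e A - set_code e A' = 2 / 3 ^ Suc N + suminf r"
    unfolding set_code_diff d_def[symmetric] by (simp add: sums_iff)
  then show ?thesis
    using r(2) by simp
qed

lemma set_code_close_imp_agree: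
  assumes "\<bar>set_code e A - set_code e A'\<bar> < 1 / 3 ^ N" and "j < N"
  shows "e j \<in> A \<longleftrightarrow> e j \<in> A'"
proof (rule ccontr)
  assume "\<not> (e j \<in> A \<longleftrightarrow> e j \<in> A')"
  then obtain k where k: "\<not> (e k \<in> A \<longleftrightarrow> e k \<in> A')" "k \<le> j"
    and below: "\<And>i. i < k \<Longrightarrow> e i \<in> A \<longleftrightarrow> e i \<in> A'"
    using ex_least_nat_le[where P = "\<lambda>i. \<not> (e i \<in> A \<longleftrightarrow> e i \<in> A')"] by blast
  have "1 / 3 ^ Suc k \<le> \<bar>set_code e A - set_code e A'\<bar>"
    using set_code_diff_ge[of k e A A'] set_code_diff_ge[of k e A' A] below k(1) by fastforce
  moreover have "(1::real) / 3 ^ N \<le> 1 / 3 ^ Suc k"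
    using k(2) assms(2) by (intro divide_left_mono power_increasing) auto
  ultimately show False
    using assms(1) by linarith
qed

lemma inj_on_set_code: "inj_on (set_code e) (Pow (range e))"
proof (rule inj_onI)
  fix A A' assume "A \<in> Pow (range e)" "A' \<in> Pow (range e)" "set_code e A = set_code e A'"
  moreover have "e j \<in> A \<longleftrightarrow> e j \<in> A'" for j
    by (rule set_code_close_imp_agree[of e A A' "Suc j"]) (use \<open>set_code e A = set_code e A'\<close> in auto)
  ultimately show "A = A'"
    by blast
qed

lemma set_code_bounds: "0 \<le> set_code e A" "set_code e A \<le> 1"
proof -
  have "\<bar>set_code e A - set_code e {}\<bar> \<le> 1 / 3 ^ 0"
    by (rule set_code_diff_le) auto
  moreover have "set_code e {} = 0"
    by (simp add: set_code_def)
  moreover have "0 \<le> set_code e A"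
    unfolding set_code_def by (rule suminf_nonneg[OF ternary_series_bound(1)[of _ 0]]) auto
  ultimately show "0 \<le> set_code e A" "set_code e A \<le> 1"
    by auto
qed

section \<open>Families closed under pointwise limits\<close>

(* Sequential closedness in the product topology on 'a set. *)
definition pointwise_closed :: "'a set set \<Rightarrow> bool" where
  "pointwise_closed K \<longleftrightarrow>
     (\<forall>As A. (\<forall>m. As m \<in> K) \<and> (\<forall>x. eventually (\<lambda>m. x \<in> As m \<longleftrightarrow> x \<in> A) sequentially) \<longrightarrow> A \<in> K)"

lemma pointwise_closedI:
  assumes "\<And>As A. (\<And>m. As m \<in> K) \<Longrightarrow> (\<And>x. eventually (\<lambda>m. x \<in> As m \<longleftrightarrow> x \<in> A) sequentially) \<Longrightarrow> A \<in> K"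
  shows "pointwise_closed K"
  using assms unfolding pointwise_closed_def by blast

lemma pointwise_closedD:
  assumes "pointwise_closed K" "\<And>m. As m \<in> K" "\<And>x. eventually (\<lambda>m. x \<in> As m \<longleftrightarrow> x \<in> A) sequentially"
  shows "A \<in> K"
  using assms unfolding pointwise_closed_def by blast

lemma pointwise_closed_Pow: "pointwise_closed (Pow B)"
proof (rule pointwise_closedI)
  fix As A assume As: "\<And>m. As m \<in> Pow B" and lim: "\<And>x. eventually (\<lambda>m. x \<in> As m \<longleftrightarrow> x \<in> A) sequentially"
  have "A \<subseteq> B"
  proof
    fix x assume "x \<in> A"
    obtain m where "x \<in> As m \<longleftrightarrow> x \<in> A"
      using eventually_happens'[OF sequentially_bot lim[of x]] by blast
    then show "x \<in> B"
      using As[of m] \<open>x \<in> A\<close> by auto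
  qed
  then show "A \<in> Pow B"
    by simp
qed

lemma pointwise_closed_Collect_mem:
  assumes "pointwise_closed K"
  shows "pointwise_closed {A \<in> K. x \<in> A}"
proof (rule pointwise_closedI)
  fix As A assume As: "\<And>m. As m \<in> {A \<in> K. x \<in> A}"
    and lim: "\<And>y. eventually (\<lambda>m. y \<in> As m \<longleftrightarrow> y \<in> A) sequentially"
  have "A \<in> K"
    using pointwise_closedD[OF assms _ lim] As by blast
  moreover obtain m where "x \<in> As m \<longleftrightarrow> x \<in> A"
    using eventually_happens'[OF sequentially_bot lim[of x]] by blast
  ultimately show "A \<in> {A \<in> K. x \<in> A}"
    using As[of m] by auto
qed

lemma ascending_union_closed_incseq:
  assumes F: "ascending_union_closed F" and P: "\<And>j. P j \<in> F" and inc: "incseq P"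
  shows "(\<Union>j. P j) \<in> F"
proof (cases "\<exists>J. \<forall>j\<ge>J. P j = P J")
  case True
  then obtain J where J: "\<And>j. j \<ge> J \<Longrightarrow> P j = P J"
    by blast
  have "P j \<subseteq> P J" for j
    using incseqD[OF inc, of j "max j J"] J[of "max j J"] by simp
  then have "(\<Union>j. P j) = P J"
    by blast
  then show ?thesis
    using P by simp
next
  case False
  have step: "\<exists>k'. k < k' \<and> P k \<subset> P k'" for k
  proof -
    obtain k' where "k \<le> k'" "P k' \<noteq> P k"
      using False by blast
    moreover have "P k \<subseteq> P k'"
      using incseqD[OF inc \<open>k \<le> k'\<close>] .
    ultimately show ?thesis
      by (intro exI[of _ k']) (auto simp: le_less)
  qed
  have "\<exists>g. \<forall>k. k \<le> g k \<and> (g k < g (Suc k) \<and> P (g k) \<subset> P (g (Suc k)))"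
  proof (rule dependent_nat_choice)
    fix x n :: nat assume "n \<le> x"
    with step[of x] show "\<exists>y. Suc n \<le> y \<and> (x < y \<and> P x \<subset> P y)"
      by (auto intro: Suc_leI le_less_trans)
  qed blast
  then obtain g where g: "\<And>k. k \<le> g k" "\<And>k. P (g k) \<subset> P (g (Suc k))"
    by blast
  have "(\<Union>k. P (g k)) \<in> F"
    using F[unfolded ascending_union_closed_def, rule_format, of "\<lambda>k. P (g k)"] P g(2) by blast
  moreover have "(\<Union>k. P (g k)) = (\<Union>j. P j)"
    using incseqD[OF inc g(1)] by blast
  ultimately show ?thesis
    by simp
qed

lemma pointwise_closed_if_ascending_union_closed:
  assumes F: "ascending_union_closed F" and down: "\<And>A B. A \<in> F \<Longrightarrow> B \<subseteq> A \<Longrightarrow> B \<in> F"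
    and S: "countable S" "F \<subseteq> Pow S"
  shows "pointwise_closed F"
proof (rule pointwise_closedI)
  fix As A assume As: "\<And>m. As m \<in> F" and lim: "\<And>x. eventually (\<lambda>m. x \<in> As m \<longleftrightarrow> x \<in> A) sequentially"
  define e where "e = from_nat_into S"
  have "A \<subseteq> S"
    using pointwise_closedD[OF pointwise_closed_Pow _ lim, of S] As S(2) by blast
  then have "A \<subseteq> range e"
    using subset_range_from_nat_into[OF S(1)] by (auto simp: e_def)
  define P where "P j = A \<inter> e ` {..<j}" for j
  have "P j \<in> F" for j
  proof -
    have "eventually (\<lambda>m. \<forall>i\<in>{..<j}. e i \<in> As m \<longleftrightarrow> e i \<in> A) sequentially"
      using lim by (intro eventually_ball_finite) auto
    then obtain m where "\<forall>i\<in>{..<j}. e i \<in> As m \<longleftrightarrow> e i \<in> A"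
      using eventually_happens'[OF sequentially_bot] by blast
    then have "P j \<subseteq> As m"
      by (auto simp: P_def)
    then show ?thesis
      using down As by blast
  qed
  moreover have "incseq P"
    by (auto simp: incseq_def P_def)
  moreover have "(\<Union>j. P j) = A"
    using \<open>A \<subseteq> range e\<close> by (fastforce simp: P_def)
  ultimately show "A \<in> F"
    using ascending_union_closed_incseq[OF F, of P] by simp
qed

lemma pointwise_closed_B2_down:
  assumes "ascending_union_closed (B2_down S T \<pi>)" "countable S"
  shows "pointwise_closed (B2_down S T \<pi>)"
  by (rule pointwise_closed_if_ascending_union_closed[OF assms(1) _ assms(2)])
     (auto simp: B2_down_def B_set_def)

lemma exists_pointwise_limit:
  assumes stable: "\<And>x. eventually (\<lambda>m. x \<in> As m) sequentially \<or> eventually (\<lambda>m. x \<notin> As m) sequentially"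
  obtains A where "\<And>x. eventually (\<lambda>m. x \<in> As m \<longleftrightarrow> x \<in> A) sequentially"
proof -
  define A where "A = {x. eventually (\<lambda>m. x \<in> As m) sequentially}"
  have "eventually (\<lambda>m. x \<in> As m \<longleftrightarrow> x \<in> A) sequentially" for x
    using stable[of x]
  proof
    assume ev: "eventually (\<lambda>m. x \<in> As m) sequentially"
    then have "x \<in> A"
      by (simp add: A_def)
    show ?thesis
      using ev by (rule eventually_mono) (simp add: \<open>x \<in> A\<close>)
  next
    assume ev: "eventually (\<lambda>m. x \<notin> As m) sequentially"
    then have "x \<notin> A"
      using eventually_conj[of "\<lambda>m. x \<in> As m" sequentially "\<lambda>m. x \<notin> As m"] by (auto simp: A_def)
    show ?thesis
      using ev by (rule eventually_mono) (simp add: \<open>x \<notin> A\<close>)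
  qed
  then show ?thesis
    by (rule that)
qed

lemma set_code_Cauchy_imp_stable:
  assumes "Cauchy (\<lambda>m. set_code e (As m))"
  shows "eventually (\<lambda>m. e j \<in> As m) sequentially \<or> eventually (\<lambda>m. e j \<notin> As m) sequentially"
proof -
  obtain M where M: "\<forall>m\<ge>M. \<forall>n\<ge>M. dist (set_code e (As m)) (set_code e (As n)) < 1 / 3 ^ Suc j"
    using metric_CauchyD[OF assms, of "1 / 3 ^ Suc j"] by auto
  have "e j \<in> As m \<longleftrightarrow> e j \<in> As M" if "m \<ge> M" for m
    by (rule set_code_close_imp_agree[OF _ lessI]) (use M that in \<open>simp add: dist_real_def\<close>)
  then show ?thesis
    unfolding eventually_sequentially by (cases "e j \<in> As M") blast+
qed

lemma set_code_tendsto: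
  assumes "\<And>x. eventually (\<lambda>m. x \<in> As m \<longleftrightarrow> x \<in> A) sequentially"
  shows "(\<lambda>m. set_code e (As m)) \<longlonglongrightarrow> set_code e A"
proof (rule LIMSEQ_I)
  fix r :: real assume "0 < r"
  then obtain N where N: "1 / 3 ^ N < r"
    using real_arch_pow_inv[of r "1/3"] by (auto simp: power_one_over)
  have "eventually (\<lambda>m. \<forall>j\<in>{..<N}. e j \<in> As m \<longleftrightarrow> e j \<in> A) sequentially"
    using assms by (intro eventually_ball_finite) auto
  then have "eventually (\<lambda>m. \<bar>set_code e (As m) - set_code e A\<bar> \<le> 1 / 3 ^ N) sequentially"
    by eventually_elim (rule set_code_diff_le, blast)
  then have "eventually (\<lambda>m. norm (set_code e (As m) - set_code e A) < r) sequentially"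
    by eventually_elim (use N in simp)
  then show "\<exists>no. \<forall>m\<ge>no. norm (set_code e (As m) - set_code e A) < r"
    by (simp add: eventually_sequentially)
qed

lemma closed_set_code_image:
  assumes K: "pointwise_closed K" "K \<subseteq> Pow (range e)"
  shows "closed (set_code e ` K)"
  unfolding closed_sequential_limits
proof (intro allI impI, elim conjE)
  fix x l assume xK: "\<forall>n. x n \<in> set_code e ` K" and xl: "x \<longlonglongrightarrow> l"
  have "\<forall>n. \<exists>A. A \<in> K \<and> x n = set_code e A"
    using xK by blast
  from choice[OF this] obtain As where "\<forall>n. As n \<in> K \<and> x n = set_code e (As n)"
    by blast
  then have As: "\<And>m. As m \<in> K" and x: "x = (\<lambda>m. set_code e (As m))"
    by auto
  have "eventually (\<lambda>m. y \<in> As m) sequentially \<or> eventually (\<lambda>m. y \<notin> As m) sequentially" for y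
  proof (cases "y \<in> range e")
    case True
    then obtain j where "y = e j"
      by blast
    then show ?thesis
      using set_code_Cauchy_imp_stable[OF LIMSEQ_imp_Cauchy[OF xl[unfolded x]], of j] by simp
  next
    case False
    then have "y \<notin> As m" for m
      using As K(2) by blast
    then show ?thesis
      by simp
  qed
  then obtain A where lim: "\<And>y. eventually (\<lambda>m. y \<in> As m \<longleftrightarrow> y \<in> A) sequentially"
    by (rule exists_pointwise_limit) blast
  have "A \<in> K"
    by (rule pointwise_closedD[OF K(1) As lim])
  moreover have "l = set_code e A"
    using LIMSEQ_unique[OF xl] set_code_tendsto[OF lim] x by simp
  ultimately show "l \<in> set_code e ` K"
    by blast
qed

section \<open>Weak limits of distributions on the reals\<close>

lemma closed_indicator_approx:
  fixes F :: "'c::metric_space set"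
  assumes "closed F" "F \<noteq> {}"
  defines "f \<equiv> \<lambda>k x. max 0 (1 - real k * infdist x F)"
  shows "\<And>k x. isCont (f k) x" and "\<And>k x. 0 \<le> f k x \<and> f k x \<le> 1"
    and "\<And>k x. indicator F x \<le> f k x" and "\<And>x. (\<lambda>k. f k x) \<longlonglongrightarrow> indicator F x"
proof -
  have in_F: "x \<in> F \<longleftrightarrow> infdist x F = 0" for x
    using in_closed_iff_infdist_zero[OF assms(1,2)] .
  show "isCont (f k) x" for k x
    unfolding f_def by (intro continuous_intros)
  show f01: "0 \<le> f k x \<and> f k x \<le> 1" for k x
    unfolding f_def using infdist_nonneg[of x F] by (auto simp: max_def)
  show "indicator F x \<le> f k x" for k x
    using f01[of k x] in_F[of x] by (auto simp: f_def indicator_def)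
  show "(\<lambda>k. f k x) \<longlonglongrightarrow> indicator F x" for x
  proof (cases "x \<in> F")
    case True
    then show ?thesis
      using in_F by (simp add: f_def)
  next
    case False
    then have d: "infdist x F > 0"
      using in_F infdist_nonneg[of x F] by auto
    obtain K :: nat where K: "1 < real K * infdist x F"
      using ex_less_of_nat_mult[OF d] by auto
    have "f k x = indicator F x" if "K \<le> k" for k
    proof -
      have "real K * infdist x F \<le> real k * infdist x F"
        using that d by (intro mult_right_mono) auto
      then show ?thesis
        using K False by (simp add: f_def)
    qed
    then show ?thesis
      by (intro tendsto_eventually) (auto simp: eventually_sequentially)
  qed
qed

lemma weak_conv_limsup_closed:
  fixes \<nu> :: "nat \<Rightarrow> real measure" and M :: "real measure"
  assumes \<nu>: "\<And>n. real_distribution (\<nu> n)" and M: "real_distribution M"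
    and conv: "weak_conv_m \<nu> M" and F: "closed F" and \<epsilon>: "\<epsilon> > 0"
  shows "eventually (\<lambda>n. measure (\<nu> n) F \<le> measure M F + \<epsilon>) sequentially"
proof (cases "F = {}")
  case False
  interpret M: real_distribution M by fact
  define f where "f k x = max 0 (1 - real k * infdist x F)" for k x
  note f = closed_indicator_approx[OF F False, folded f_def]
  have Fb: "F \<in> sets borel"
    using F by (rule borel_closed)
  have f_meas: "f k \<in> borel_measurable borel" for k
    using f(1) by (intro borel_measurable_continuous_onI continuous_at_imp_continuous_on) auto
  have f_bound: "norm (f k x) \<le> 1" for k x
    using f(2)[of k x] by simp
  have "(\<lambda>k. \<integral>x. f k x \<partial>M) \<longlonglongrightarrow> (\<integral>x. indicator F x \<partial>M)"
    by (rule integral_dominated_convergence[where w="\<lambda>_. 1"])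
       (use f_meas f_bound f(4) Fb in \<open>auto simp: measurable_cong_sets[OF M.events_eq_borel refl]\<close>)
  moreover have "(\<integral>x. indicator F x \<partial>M) = measure M F"
    using Fb by (simp add: M.events_eq_borel)
  ultimately have "eventually (\<lambda>k. (\<integral>x. f k x \<partial>M) < measure M F + \<epsilon>) sequentially"
    using \<epsilon> by (intro order_tendstoD(2)) auto
  then obtain k where k: "(\<integral>x. f k x \<partial>M) < measure M F + \<epsilon>"
    using eventually_happens'[OF sequentially_bot] by blast
  have "(\<lambda>n. \<integral>x. f k x \<partial>\<nu> n) \<longlonglongrightarrow> (\<integral>x. f k x \<partial>M)"
    by (rule weak_conv_imp_integral_bdd_continuous_conv[OF \<nu> M conv f(1) f_bound])
  then have "eventually (\<lambda>n. (\<integral>x. f k x \<partial>\<nu> n) < measure M F + \<epsilon>) sequentially"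
    using k by (rule order_tendstoD(2))
  then show ?thesis
  proof eventually_elim
    case (elim n)
    interpret N: real_distribution "\<nu> n"
      by (rule \<nu>)
    have "measure (\<nu> n) F = (\<integral>x. indicator F x \<partial>\<nu> n)"
      using Fb by (simp add: N.events_eq_borel)
    also have "\<dots> \<le> (\<integral>x. f k x \<partial>\<nu> n)"
    proof (rule integral_mono)
      show "integrable (\<nu> n) (indicator F :: real \<Rightarrow> real)"
        by (rule integrable_real_indicator)
          (use Fb in \<open>auto simp: N.events_eq_borel N.emeasure_eq_measure\<close>)
      show "integrable (\<nu> n) (f k)"
        by (rule N.integrable_const_bound[where B=1])
           (use f_meas f_bound in \<open>auto simp: measurable_cong_sets[OF N.events_eq_borel refl]\<close>)
    qed (use f(3) in auto)
    finally show ?case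
      using elim by simp
  qed
qed (use \<epsilon> in simp)

lemma weak_conv_closed_full_measure:
  fixes \<nu> :: "nat \<Rightarrow> real measure" and M :: "real measure"
  assumes \<nu>: "\<And>n. real_distribution (\<nu> n)" and M: "real_distribution M"
    and conv: "weak_conv_m \<nu> M" and F: "closed F" and full: "\<And>n. measure (\<nu> n) F = 1"
  shows "measure M F = 1"
proof -
  interpret M: real_distribution M by fact
  have "1 \<le> measure M F"
  proof (rule field_le_epsilon)
    fix \<epsilon> :: real assume "\<epsilon> > 0"
    show "1 \<le> measure M F + \<epsilon>"
      using eventually_happens'[OF sequentially_bot weak_conv_limsup_closed[OF \<nu> M conv F \<open>\<epsilon> > 0\<close>]] full
      by auto
  qed
  then show ?thesis
    using M.prob_le_1[of F] by simp
qed

lemma exists_pmf_of_partition: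
  fixes H :: "nat \<Rightarrow> 'c set"
  assumes M: "prob_space M" and H: "range H \<subseteq> sets M" "disjoint_family H"
    and full: "measure M (\<Union>i. H i) = 1"
  obtains w :: "nat pmf" where "\<And>I. measure_pmf.prob w I = measure M (\<Union>i\<in>I. H i)"
proof
  interpret M: prob_space M by fact
  define w where "w = embed_pmf (\<lambda>i. measure M (H i))"
  have "(\<lambda>i. measure M (H i)) sums 1"
    using measure_UNION[OF H] full by (simp add: M.emeasure_eq_measure)
  then have pmf_w: "pmf w i = measure M (H i)" for i
    unfolding w_def by (intro pmf_embed_pmf)
      (auto simp: nn_integral_count_space_nat sums_iff suminf_ennreal2)
  fix I
  define HI where "HI i = (if i \<in> I then H i else {})" for i
  have HI: "range HI \<subseteq> sets M" "disjoint_family HI" "(\<Union>i. HI i) = (\<Union>i\<in>I. H i)"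
    using H by (auto simp: HI_def disjoint_family_on_def split: if_splits)
  have "emeasure (measure_pmf w) I = (\<integral>\<^sup>+i. ennreal (pmf w i) \<partial>count_space I)"
    by (simp add: nn_integral_pmf)
  also have "\<dots> = (\<integral>\<^sup>+i. ennreal (pmf w i) * indicator I i \<partial>count_space UNIV)"
    by (simp add: nn_integral_count_space_indicator)
  also have "\<dots> = (\<Sum>i. ennreal (pmf w i) * indicator I i)"
    by (rule nn_integral_count_space_nat)
  also have "\<dots> = (\<Sum>i. emeasure M (HI i))"
    by (intro suminf_cong) (auto simp: HI_def pmf_w M.emeasure_eq_measure)
  also have "\<dots> = emeasure M (\<Union>i\<in>I. H i)"
    using suminf_emeasure[OF HI(1,2)] HI(3) by simp
  finally show "measure_pmf.prob w I = measure M (\<Union>i\<in>I. H i)"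
    by (simp add: M.emeasure_eq_measure measure_pmf.emeasure_eq_measure)
qed

lemma pmf_dominating_measure:
  fixes G :: "nat \<Rightarrow> 'c set"
  assumes M: "prob_space M" and G: "range G \<subseteq> sets M" and cover: "measure M (\<Union>i. G i) = 1"
  obtains w :: "nat pmf" where "\<And>X. X \<in> sets M \<Longrightarrow> measure M X \<le> measure_pmf.prob w {i. X \<inter> G i \<noteq> {}}"
proof -
  interpret M: prob_space M by fact
  define H where "H = disjointed G"
  have H: "range H \<subseteq> sets M" "disjoint_family H" "(\<Union>i. H i) = (\<Union>i. G i)"
    unfolding H_def
    by (rule sets.range_disjointed_sets[OF G] disjoint_family_disjointed UN_disjointed_eq)+
  obtain w where w: "\<And>I. measure_pmf.prob w I = measure M (\<Union>i\<in>I. H i)"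
    using exists_pmf_of_partition[OF M H(1,2)] H(3) cover by metis
  have "measure M X \<le> measure_pmf.prob w {i. X \<inter> G i \<noteq> {}}" if X: "X \<in> sets M" for X
  proof -
    let ?I = "{i. X \<inter> G i \<noteq> {}}"
    have X_sub: "X \<subseteq> (\<Union>i\<in>?I. H i) \<union> (space M - (\<Union>i. H i))"
    proof
      fix x assume "x \<in> X"
      show "x \<in> (\<Union>i\<in>?I. H i) \<union> (space M - (\<Union>i. H i))"
      proof (cases "x \<in> (\<Union>i. H i)")
        case True
        then obtain i where "x \<in> H i"
          by blast
        moreover have "H i \<subseteq> G i"
          unfolding H_def by (rule disjointed_subset)
        ultimately show ?thesis
          using \<open>x \<in> X\<close> by blast
      next
        case False
        then show ?thesis
          using \<open>x \<in> X\<close> sets.sets_into_space[OF X] by blast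
      qed
    qed
    have "measure M X \<le> measure M ((\<Union>i\<in>?I. H i) \<union> (space M - (\<Union>i. H i)))"
      using H(1) by (intro M.finite_measure_mono[OF X_sub]) auto
    also have "\<dots> \<le> measure M (\<Union>i\<in>?I. H i) + measure M (space M - (\<Union>i. H i))"
      using H(1) by (intro measure_Un_le) auto
    also have "measure M (space M - (\<Union>i. H i)) = 0"
      using G H(3) cover by (subst M.prob_compl) auto
    finally show ?thesis
      by (simp add: w)
  qed
  then show ?thesis
    by (rule that)
qed

lemma measure_distr_pmf:
  "X \<in> sets borel \<Longrightarrow> measure (distr (measure_pmf q) borel f) X = measure_pmf.prob q (f -` X)"
  by (subst measure_distr) auto

lemma measure_pmf_prob_le_distr:
  assumes "C \<in> sets borel" "set_pmf q \<subseteq> T" "\<And>t. t \<in> X \<inter> T \<Longrightarrow> f t \<in> C"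
  shows "measure_pmf.prob q X \<le> measure (distr (measure_pmf q) borel f) C"
proof -
  have "measure_pmf.prob q X = measure_pmf.prob q (X \<inter> set_pmf q)"
    by (simp add: measure_Int_set_pmf)
  also have "\<dots> \<le> measure_pmf.prob q (f -` C)"
    using assms(2,3) by (intro measure_pmf.finite_measure_mono) auto
  also have "\<dots> = measure (distr (measure_pmf q) borel f) C"
    using assms(1) by (simp add: measure_distr_pmf)
  finally show ?thesis .
qed

lemma real_distribution_distr_pmf: "real_distribution (distr (measure_pmf q) borel f)"
  unfolding real_distribution_def real_distribution_axioms_def
  by (auto intro!: prob_space.prob_space_distr prob_space_measure_pmf)

lemma distr_pmf_weak_conv_subseq:
  fixes f :: "'b \<Rightarrow> real" and qs :: "nat \<Rightarrow> 'b pmf"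
  assumes bounded: "\<And>t. \<bar>f t\<bar> \<le> B"
  obtains r M where "strict_mono r" "real_distribution M"
    "weak_conv_m (\<lambda>n. distr (measure_pmf (qs (r n))) borel f) M"
proof -
  define \<mu> where "\<mu> n = distr (measure_pmf (qs n)) borel f" for n
  have "0 \<le> B"
    using bounded[of undefined] by linarith
  have "f -` {- B - 1<..B} = UNIV"
    using bounded by (force simp: abs_le_iff)
  then have full: "measure (\<mu> n) {- B - 1<..B} = 1" for n
    by (simp add: \<mu>_def measure_distr_pmf)
  have "tight \<mu>"
    unfolding tight_def
  proof (intro conjI allI impI)
    show "real_distribution (\<mu> n)" for n
      unfolding \<mu>_def by (rule real_distribution_distr_pmf)
    fix \<epsilon> :: real assume "\<epsilon> > 0"
    then show "\<exists>a b. a < b \<and> (\<forall>n. 1 - \<epsilon> < measure (\<mu> n) {a<..b})"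
      using \<open>0 \<le> B\<close> full by (intro exI[of _ "- B - 1"] exI[of _ B]) auto
  qed
  from tight_imp_convergent_subsubsequence[OF this strict_mono_id]
  obtain r M where "strict_mono r" "real_distribution M" "weak_conv_m (\<mu> \<circ> r) M"
    by auto
  then show ?thesis
    using that by (simp add: \<mu>_def comp_def)
qed

section \<open>Limits of mixed strategies of player 2\<close>

definition losing_set_distr :: "(nat \<Rightarrow> 'a) \<Rightarrow> 'a set \<Rightarrow> ('a \<Rightarrow> 'b \<Rightarrow> bool) \<Rightarrow> 'b pmf \<Rightarrow> real measure" where
  "losing_set_distr e S \<pi> q = distr (measure_pmf q) borel (\<lambda>t. set_code e (B_set S \<pi> t))"

lemma real_distribution_losing_set_distr: "real_distribution (losing_set_distr e S \<pi> q)"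
  unfolding losing_set_distr_def by (rule real_distribution_distr_pmf)

lemma prob_le_losing_set_distr:
  assumes "q \<in> Delta T" "closed (set_code e ` K)" "\<And>t. t \<in> X \<inter> T \<Longrightarrow> B_set S \<pi> t \<in> K"
  shows "measure_pmf.prob q X \<le> measure (losing_set_distr e S \<pi> q) (set_code e ` K)"
  unfolding losing_set_distr_def using assms(1,3)
  by (intro measure_pmf_prob_le_distr[OF borel_closed[OF assms(2)]]) (auto simp: Delta_def)

lemma losing_set_distr_weak_conv_subseq:
  fixes qs :: "nat \<Rightarrow> 'b pmf"
  obtains r M where "strict_mono r" "real_distribution M"
    "weak_conv_m (\<lambda>n. losing_set_distr e S \<pi> (qs (r n))) M"
proof -
  have bound: "\<bar>set_code e (B_set S \<pi> t)\<bar> \<le> 1" for t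
    using set_code_bounds[of e "B_set S \<pi> t"] by simp
  obtain r M where "strict_mono r" "real_distribution M"
    "weak_conv_m (\<lambda>n. distr (measure_pmf (qs (r n))) borel (\<lambda>t. set_code e (B_set S \<pi> t))) M"
    by (rule distr_pmf_weak_conv_subseq[where f = "\<lambda>t. set_code e (B_set S \<pi> t)" and qs = qs, OF bound])
  then show ?thesis
    using that unfolding losing_set_distr_def by blast
qed

lemma set_code_images_meet_imp_mem:
  assumes "x \<in> set_code e ` {A \<in> K. s \<in> A}" "x \<in> set_code e ` Pow B"
    and "K \<subseteq> Pow (range e)" "B \<subseteq> range e"
  shows "s \<in> B"
proof -
  obtain A A' where A: "A \<in> K" "s \<in> A" "x = set_code e A" and A': "A' \<subseteq> B" "x = set_code e A'"
    using assms(1,2) by blast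
  have "A \<in> Pow (range e)" "A' \<in> Pow (range e)"
    using A(1) A'(1) assms(3,4) by auto
  then have "A = A'"
    using inj_onD[OF inj_on_set_code] A(3) A'(2) by metis
  then show ?thesis
    using A(2) A'(1) by blast
qed

lemma set_code_B2_down_subset:
  assumes "range tt = T"
  shows "set_code e ` B2_down S T \<pi> \<subseteq> (\<Union>i. set_code e ` Pow (B_set S \<pi> (tt i)))"
proof
  fix x assume "x \<in> set_code e ` B2_down S T \<pi>"
  then obtain A t where "x = set_code e A" "t \<in> T" "A \<subseteq> B_set S \<pi> t"
    by (auto simp: B2_down_def)
  moreover obtain i where "t = tt i"
    using assms \<open>t \<in> T\<close> by blast
  ultimately show "x \<in> (\<Union>i. set_code e ` Pow (B_set S \<pi> (tt i)))"
    by blast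
qed

lemma limit_measure_dominated_by_strategy:
  fixes S :: "'a set" and T :: "'b set" and \<pi> :: "'a \<Rightarrow> 'b \<Rightarrow> bool"
    and M :: "real measure" and e :: "nat \<Rightarrow> 'a"
  defines "D \<equiv> B2_down S T \<pi>"
  assumes T: "countable T" "T \<noteq> {}" and e: "S \<subseteq> range e" and D: "pointwise_closed D"
    and M: "real_distribution M" and full: "measure M (set_code e ` D) = 1"
  obtains q where "q \<in> Delta T"
    "\<And>s. s \<in> S \<Longrightarrow> measure M (set_code e ` {A \<in> D. s \<in> A}) \<le> measure_pmf.prob q {t. \<not> \<pi> s t}"
proof -
  interpret M: real_distribution M by fact
  define tt where "tt = from_nat_into T"
  have tt: "range tt = T"
    unfolding tt_def using T by simp
  have D_sub: "D \<subseteq> Pow (range e)"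
    using e by (auto simp: D_def B2_down_def B_set_def)
  define G where "G i = set_code e ` Pow (B_set S \<pi> (tt i))" for i
  have "closed (G i)" for i
    unfolding G_def by (rule closed_set_code_image[OF pointwise_closed_Pow])
      (use e in \<open>auto simp: B_set_def\<close>)
  then have G: "range G \<subseteq> sets M"
    by (auto simp: M.events_eq_borel)
  have "set_code e ` D \<subseteq> (\<Union>i. G i)"
    unfolding D_def G_def by (rule set_code_B2_down_subset[OF tt])
  then have "measure M (set_code e ` D) \<le> measure M (\<Union>i. G i)"
    using G by (intro M.finite_measure_mono) auto
  then have "measure M (\<Union>i. G i) = 1"
    using full M.prob_le_1[of "\<Union>i. G i"] by linarith
  then obtain w where w: "\<And>X. X \<in> sets M \<Longrightarrow> measure M X \<le> measure_pmf.prob w {i. X \<inter> G i \<noteq> {}}"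
    using pmf_dominating_measure[OF M.prob_space_axioms G] by blast
  show ?thesis
  proof
    show "map_pmf tt w \<in> Delta T"
      using tt by (auto simp: Delta_def)
    fix s assume "s \<in> S"
    let ?F = "set_code e ` {A \<in> D. s \<in> A}"
    have "{i. ?F \<inter> G i \<noteq> {}} \<subseteq> {i. \<not> \<pi> s (tt i)}"
    proof
      fix i assume "i \<in> {i. ?F \<inter> G i \<noteq> {}}"
      then obtain x where "x \<in> ?F" "x \<in> set_code e ` Pow (B_set S \<pi> (tt i))"
        by (auto simp: G_def)
      then have "s \<in> B_set S \<pi> (tt i)"
        by (rule set_code_images_meet_imp_mem[OF _ _ D_sub]) (use e in \<open>auto simp: B_set_def\<close>)
      then show "i \<in> {i. \<not> \<pi> s (tt i)}"
        by (simp add: B_set_def)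
    qed
    moreover have "closed ?F"
      by (rule closed_set_code_image[OF pointwise_closed_Collect_mem[OF D]]) (use D_sub in blast)
    then have "?F \<in> sets M"
      by (simp add: M.events_eq_borel)
    ultimately have "measure M ?F \<le> measure_pmf.prob w {i. \<not> \<pi> s (tt i)}"
      using w[of ?F] measure_pmf.finite_measure_mono[of "{i. ?F \<inter> G i \<noteq> {}}" "{i. \<not> \<pi> s (tt i)}" w]
      by simp
    then show "measure M ?F \<le> measure_pmf.prob (map_pmf tt w) {t. \<not> \<pi> s t}"
      by (simp add: vimage_def)
  qed
qed

lemma losing_set_distr_limit_full:
  assumes qs: "\<And>n. qs n \<in> Delta T" and conv: "weak_conv_m (\<lambda>n. losing_set_distr e S \<pi> (qs n)) M"
    and M: "real_distribution M" and closed: "closed (set_code e ` B2_down S T \<pi>)"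
  shows "measure M (set_code e ` B2_down S T \<pi>) = 1"
proof (rule weak_conv_closed_full_measure[OF real_distribution_losing_set_distr M conv closed])
  fix n
  let ?\<mu> = "losing_set_distr e S \<pi> (qs n)" and ?C = "set_code e ` B2_down S T \<pi>"
  have "measure_pmf.prob (qs n) UNIV \<le> measure ?\<mu> ?C"
    by (rule prob_le_losing_set_distr[OF qs closed]) (auto simp: B2_down_def)
  moreover have "measure ?\<mu> ?C \<le> 1"
    using real_distribution_losing_set_distr[of e S \<pi> "qs n"]
    by (simp add: real_distribution_def prob_space.prob_le_1)
  ultimately show "measure ?\<mu> ?C = 1"
    by simp
qed

lemma exists_lower_limit_strategy:
  fixes S :: "'a set" and T :: "'b set" and \<pi> :: "'a \<Rightarrow> 'b \<Rightarrow> bool" and qs :: "nat \<Rightarrow> 'b pmf"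
  assumes S: "countable S" and T: "countable T" and auc: "ascending_union_closed (B2_down S T \<pi>)"
    and qs: "\<And>n. qs n \<in> Delta T"
  obtains q r where "q \<in> Delta T" "strict_mono r"
    "\<And>s \<epsilon>. s \<in> S \<Longrightarrow> \<epsilon> > 0 \<Longrightarrow>
       eventually (\<lambda>n. win_prob \<pi> q s \<le> win_prob \<pi> (qs (r n)) s + \<epsilon>) sequentially"
proof -
  define D where "D = B2_down S T \<pi>"
  define e where "e = from_nat_into S"
  have e: "S \<subseteq> range e"
    unfolding e_def by (rule subset_range_from_nat_into[OF S])
  have D: "pointwise_closed D"
    unfolding D_def by (rule pointwise_closed_B2_down[OF auc S])
  have D_sub: "D \<subseteq> Pow (range e)"
    using e by (auto simp: D_def B2_down_def B_set_def)
  have "T \<noteq> {}"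
    using qs[of 0] set_pmf_not_empty[of "qs 0"] by (auto simp: Delta_def)
  obtain r M where r: "strict_mono r" and M: "real_distribution M"
    and conv: "weak_conv_m (\<lambda>n. losing_set_distr e S \<pi> (qs (r n))) M"
    by (rule losing_set_distr_weak_conv_subseq)
  have "measure M (set_code e ` D) = 1"
    unfolding D_def
    by (rule losing_set_distr_limit_full[OF qs conv M])
       (use closed_set_code_image[OF D D_sub] in \<open>simp add: D_def\<close>)
  then obtain q where q: "q \<in> Delta T"
    and dom: "\<And>s. s \<in> S \<Longrightarrow> measure M (set_code e ` {A \<in> D. s \<in> A}) \<le> measure_pmf.prob q {t. \<not> \<pi> s t}"
    using limit_measure_dominated_by_strategy[OF T \<open>T \<noteq> {}\<close> e D[unfolded D_def] M]
    unfolding D_def by blast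
  define \<nu> where "\<nu> n = losing_set_distr e S \<pi> (qs (r n))" for n
  have \<nu>: "real_distribution (\<nu> n)" for n
    unfolding \<nu>_def by (rule real_distribution_losing_set_distr)
  have \<nu>_conv: "weak_conv_m \<nu> M"
    using conv by (simp add: \<nu>_def[abs_def])
  show ?thesis
  proof (rule that[OF q r])
    fix s \<epsilon> assume "s \<in> S" "(\<epsilon>::real) > 0"
    let ?F = "set_code e ` {A \<in> D. s \<in> A}"
    have closed_F: "closed ?F"
      by (rule closed_set_code_image[OF pointwise_closed_Collect_mem[OF D]]) (use D_sub in blast)
    have lose: "measure_pmf.prob (qs (r n)) {t. \<not> \<pi> s t} \<le> measure (\<nu> n) ?F" for n
      unfolding \<nu>_def by (rule prob_le_losing_set_distr[OF qs closed_F])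
        (use \<open>s \<in> S\<close> in \<open>auto simp: D_def B2_down_def B_set_def\<close>)
    from weak_conv_limsup_closed[OF \<nu> M \<nu>_conv closed_F \<open>\<epsilon> > 0\<close>]
    show "eventually (\<lambda>n. win_prob \<pi> q s \<le> win_prob \<pi> (qs (r n)) s + \<epsilon>) sequentially"
    proof (rule eventually_mono)
      fix n assume "measure (\<nu> n) ?F \<le> measure M ?F + \<epsilon>"
      then show "win_prob \<pi> q s \<le> win_prob \<pi> (qs (r n)) s + \<epsilon>"
        using dom[OF \<open>s \<in> S\<close>] lose[of n] unfolding win_prob_eq_1_minus_lose by linarith
    qed
  qed
qed

lemma expectation_le_of_eventually_le:
  fixes f :: "'a \<Rightarrow> real" and g :: "nat \<Rightarrow> 'a \<Rightarrow> real"
  assumes f: "\<And>s. 0 \<le> f s \<and> f s \<le> 1" and g: "\<And>n s. 0 \<le> g n s \<and> g n s \<le> 1"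
    and lim: "\<And>s \<epsilon>. s \<in> set_pmf p \<Longrightarrow> \<epsilon> > 0 \<Longrightarrow> eventually (\<lambda>n. f s \<le> g n s + \<epsilon>) sequentially"
    and "\<epsilon> > 0"
  shows "eventually (\<lambda>n. measure_pmf.expectation p f \<le> measure_pmf.expectation p (g n) + \<epsilon>)
           sequentially"
proof -
  define h where "h n s = max 0 (f s - g n s - \<epsilon> / 2)" for n s
  have int: "integrable (measure_pmf p) u" if "\<And>s. \<bar>u s\<bar> \<le> 1" for u :: "'a \<Rightarrow> real"
    by (rule measure_pmf.integrable_const_bound[where B=1]) (use that in auto)
  have h_bound: "\<bar>h n s\<bar> \<le> 1" for n s
    using f[of s] g[of n s] \<open>\<epsilon> > 0\<close> by (auto simp: h_def)
  have "(\<lambda>n. h n s) \<longlonglongrightarrow> 0" if "s \<in> set_pmf p" for s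
  proof (rule tendsto_eventually)
    show "eventually (\<lambda>n. h n s = 0) sequentially"
      using lim[OF that, of "\<epsilon> / 2"] \<open>\<epsilon> > 0\<close> by (auto simp: h_def elim: eventually_mono)
  qed
  then have "(\<lambda>n. measure_pmf.expectation p (h n)) \<longlonglongrightarrow> measure_pmf.expectation p (\<lambda>_. 0)"
    by (intro integral_dominated_convergence[where w="\<lambda>_. 1"]) (auto simp: h_bound AE_measure_pmf_iff)
  then have "eventually (\<lambda>n. measure_pmf.expectation p (h n) < \<epsilon> / 2) sequentially"
    using \<open>\<epsilon> > 0\<close> by (intro order_tendstoD(2)) auto
  then show ?thesis
  proof (rule eventually_mono)
    fix n assume small: "measure_pmf.expectation p (h n) < \<epsilon> / 2"
    have int_f: "integrable (measure_pmf p) f" and int_g: "integrable (measure_pmf p) (g n)"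
      and int_h: "integrable (measure_pmf p) (h n)"
      using f g h_bound by (auto intro!: int simp: abs_le_iff)
    have "measure_pmf.expectation p f \<le> measure_pmf.expectation p (\<lambda>s. g n s + \<epsilon> / 2 + h n s)"
      using int_f int_g int_h by (intro integral_mono) (auto simp: h_def)
    also have "\<dots> = measure_pmf.expectation p (g n) + \<epsilon> / 2 + measure_pmf.expectation p (h n)"
      using int_g int_h by simp
    finally show "measure_pmf.expectation p f \<le> measure_pmf.expectation p (g n) + \<epsilon>"
      using small by simp
  qed
qed

lemma le_of_eventually_le_subseq:
  fixes x W :: real and y :: "nat \<Rightarrow> real" and r :: "nat \<Rightarrow> nat"
  assumes r: "strict_mono r"
    and lim: "\<And>\<epsilon>. \<epsilon> > 0 \<Longrightarrow> eventually (\<lambda>n. x \<le> y (r n) + \<epsilon>) sequentially"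
    and bound: "\<And>m. j \<le> m \<Longrightarrow> y m \<le> W + inverse (real (Suc m))"
  shows "x \<le> W"
proof (rule field_le_epsilon)
  fix \<epsilon> :: real assume "\<epsilon> > 0"
  have ev1: "eventually (\<lambda>n. j \<le> r n) sequentially"
  proof (rule eventually_mono[OF eventually_ge_at_top[of j]])
    fix n assume "j \<le> n"
    then show "j \<le> r n"
      using seq_suble[OF r, of n] by linarith
  qed
  have ev2: "eventually (\<lambda>n. inverse (real (Suc (r n))) < \<epsilon> / 2) sequentially"
    using order_tendstoD(2)[OF LIMSEQ_subseq_LIMSEQ[OF LIMSEQ_inverse_real_of_nat r], of "\<epsilon> / 2"]
      \<open>\<epsilon> > 0\<close>
    by (simp add: comp_def)
  have ev3: "eventually (\<lambda>n. x \<le> y (r n) + \<epsilon> / 2) sequentially"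
    using lim \<open>\<epsilon> > 0\<close> by simp
  obtain n where "j \<le> r n" "inverse (real (Suc (r n))) < \<epsilon> / 2" "x \<le> y (r n) + \<epsilon> / 2"
    using eventually_happens'[OF sequentially_bot eventually_conj[OF ev1 eventually_conj[OF ev2 ev3]]]
    by blast
  then show "x \<le> W + \<epsilon>"
    using bound[of "r n"] by linarith
qed

lemma pi_mix_INF_attained:
  assumes S: "countable S" and T: "countable T" "T \<noteq> {}"
    and auc: "ascending_union_closed (B2_down S T \<pi>)" and p: "p \<in> Delta S"
  shows "\<exists>q0\<in>Delta T. pi_mix S T \<pi> p q0 = (INF q\<in>Delta T. pi_mix S T \<pi> p q)"
proof -
  let ?V = "pi_mix S T \<pi> p"
  define m where "m = (INF q\<in>Delta T. ?V q)"
  have "\<exists>q\<in>Delta T. ?V q < m + inverse (real (Suc n))" for n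
  proof -
    have "(INF q\<in>Delta T. ?V q) < m + inverse (real (Suc n))"
      unfolding m_def by simp
    then show ?thesis
      by (simp only: cINF_less_iff[OF Delta_nonempty[OF T(2)] pi_mix_bdd_below[OF p]])
  qed
  then have "\<forall>n. \<exists>q. q \<in> Delta T \<and> ?V q < m + inverse (real (Suc n))"
    by blast
  from choice[OF this] obtain qs
    where qs: "\<And>n. qs n \<in> Delta T" "\<And>n. ?V (qs n) < m + inverse (real (Suc n))"
    by blast
  obtain q0 r where q0: "q0 \<in> Delta T" and r: "strict_mono r"
    and lim: "\<And>s \<epsilon>. s \<in> S \<Longrightarrow> \<epsilon> > 0 \<Longrightarrow>
                eventually (\<lambda>n. win_prob \<pi> q0 s \<le> win_prob \<pi> (qs (r n)) s + \<epsilon>) sequentially"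
    using exists_lower_limit_strategy[where qs = qs, OF S T(1) auc qs(1)] by blast
  have "?V q0 \<le> m"
  proof (rule le_of_eventually_le_subseq[where y = "\<lambda>k. ?V (qs k)" and j = 0, OF r])
    show "?V (qs k) \<le> m + inverse (real (Suc k))" for k
      using qs(2)[of k] by simp
    fix \<epsilon> :: real assume "\<epsilon> > 0"
    have lim_p: "eventually (\<lambda>n. win_prob \<pi> q0 s \<le> win_prob \<pi> (qs (r n)) s + \<delta>) sequentially"
      if "s \<in> set_pmf p" "\<delta> > 0" for s \<delta>
      using lim[OF _ that(2)] that(1) p unfolding Delta_def by blast
    have "eventually (\<lambda>n. measure_pmf.expectation p (win_prob \<pi> q0)
                         \<le> measure_pmf.expectation p (win_prob \<pi> (qs (r n))) + \<epsilon>) sequentially"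
      by (rule expectation_le_of_eventually_le[OF _ _ lim_p])
        (use \<open>\<epsilon> > 0\<close> win_prob_nonneg win_prob_le_1 in auto)
    then show "eventually (\<lambda>n. ?V q0 \<le> ?V (qs (r n)) + \<epsilon>) sequentially"
      by (simp add: pi_mix_eq_expectation[OF p] q0 qs(1))
  qed
  moreover have "m \<le> ?V q0"
    unfolding m_def by (rule cINF_lower[OF pi_mix_bdd_below[OF p] q0])
  ultimately show ?thesis
    using q0 unfolding m_def by (intro bexI[of _ q0]) auto
qed

section \<open>Multiplicative weights\<close>

lemma exp_le_affine_on_unit_interval:
  fixes a \<eta> :: real
  assumes "0 \<le> a" "a \<le> 1"
  shows "exp (\<eta> * a) \<le> 1 + (exp \<eta> - 1) * a"
proof -
  have "exp ((1 - a) *\<^sub>R 0 + a *\<^sub>R \<eta>) \<le> (1 - a) * exp 0 + a * exp \<eta>"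
    by (rule convex_onD[OF exp_convex]) (use assms in auto)
  then show ?thesis
    by (simp add: algebra_simps)
qed

lemma exp_potential_step:
  fixes L a :: "'a \<Rightarrow> real" and \<eta> c :: real
  assumes "finite F" "\<And>s. s \<in> F \<Longrightarrow> 0 \<le> a s \<and> a s \<le> 1" "0 \<le> \<eta>"
    and avg: "(\<Sum>s\<in>F. exp (\<eta> * L s) * a s) \<le> c * (\<Sum>s\<in>F. exp (\<eta> * L s))"
  shows "(\<Sum>s\<in>F. exp (\<eta> * (L s + a s))) \<le> (\<Sum>s\<in>F. exp (\<eta> * L s)) * exp ((exp \<eta> - 1) * c)"
proof -
  define \<beta> where "\<beta> = exp \<eta> - 1"
  define \<Phi> where "\<Phi> = (\<Sum>s\<in>F. exp (\<eta> * L s))"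
  have "0 \<le> \<beta>"
    using \<open>0 \<le> \<eta>\<close> by (simp add: \<beta>_def)
  have "(\<Sum>s\<in>F. exp (\<eta> * (L s + a s))) = (\<Sum>s\<in>F. exp (\<eta> * L s) * exp (\<eta> * a s))"
    by (simp add: distrib_left exp_add)
  also have "\<dots> \<le> (\<Sum>s\<in>F. exp (\<eta> * L s) * (1 + \<beta> * a s))"
  proof (intro sum_mono mult_left_mono)
    fix s assume "s \<in> F"
    then show "exp (\<eta> * a s) \<le> 1 + \<beta> * a s"
      using exp_le_affine_on_unit_interval[of "a s" \<eta>] assms(2) by (simp add: \<beta>_def mult.commute)
  qed simp
  also have "\<dots> = \<Phi> + \<beta> * (\<Sum>s\<in>F. exp (\<eta> * L s) * a s)"
    by (simp add: \<Phi>_def distrib_left sum.distrib sum_distrib_left algebra_simps)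
  also have "\<dots> \<le> \<Phi> * (1 + \<beta> * c)"
    using mult_left_mono[OF avg \<open>0 \<le> \<beta>\<close>] by (simp add: \<Phi>_def algebra_simps)
  also have "\<dots> \<le> \<Phi> * exp (\<beta> * c)"
    unfolding \<Phi>_def by (intro mult_left_mono sum_nonneg exp_ge_add_one_self) auto
  finally show ?thesis
    by (simp add: \<Phi>_def \<beta>_def)
qed

lemma exp_potential_iterate:
  fixes sel :: "('a \<Rightarrow> real) \<Rightarrow> 'a \<Rightarrow> real" and \<eta> c :: real
  assumes "finite F" "0 \<le> \<eta>" and sel_bounds: "\<And>L s. s \<in> F \<Longrightarrow> 0 \<le> sel L s \<and> sel L s \<le> 1"
    and sel: "\<And>L. (\<Sum>s\<in>F. exp (\<eta> * L s) * sel L s) \<le> c * (\<Sum>s\<in>F. exp (\<eta> * L s))"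
  defines "cum \<equiv> rec_nat (\<lambda>_. 0) (\<lambda>_ L s. L s + sel L s)"
  shows "(\<Sum>s\<in>F. exp (\<eta> * cum k s)) \<le> real (card F) * exp (real k * ((exp \<eta> - 1) * c))"
proof (induction k)
  case 0
  then show ?case
    by (simp add: cum_def)
next
  case (Suc k)
  have "cum (Suc k) = (\<lambda>s. cum k s + sel (cum k) s)"
    by (simp add: cum_def)
  then have "(\<Sum>s\<in>F. exp (\<eta> * cum (Suc k) s)) \<le> (\<Sum>s\<in>F. exp (\<eta> * cum k s)) * exp ((exp \<eta> - 1) * c)"
    using exp_potential_step[where L = "cum k" and a = "sel (cum k)",
                             OF assms(1) sel_bounds assms(2) sel]
    by simp
  also have "\<dots> \<le> real (card F) * exp (real k * ((exp \<eta> - 1) * c)) * exp ((exp \<eta> - 1) * c)"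
    using Suc by (intro mult_right_mono) auto
  finally show ?case
    by (simp add: algebra_simps flip: exp_add)
qed

lemma response_to_unnormalised_weights:
  fixes F :: "'a set" and A :: "('a \<Rightarrow> real) set" and v :: "'a \<Rightarrow> real"
  assumes response: "\<And>w. (\<forall>s\<in>F. 0 \<le> w s) \<Longrightarrow> (\<Sum>s\<in>F. w s) = 1 \<Longrightarrow> \<exists>a\<in>A. (\<Sum>s\<in>F. w s * a s) \<le> c"
    and "\<And>s. s \<in> F \<Longrightarrow> 0 \<le> v s" "0 < (\<Sum>s\<in>F. v s)"
  shows "\<exists>a\<in>A. (\<Sum>s\<in>F. v s * a s) \<le> c * (\<Sum>s\<in>F. v s)"
proof -
  let ?V = "\<Sum>s\<in>F. v s"
  have "(\<Sum>s\<in>F. v s / ?V) = 1"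
    using assms(3) by (simp flip: sum_divide_distrib)
  then obtain a where "a \<in> A" "(\<Sum>s\<in>F. v s / ?V * a s) \<le> c"
    using response[of "\<lambda>s. v s / ?V"] assms(2,3) by auto
  have "(\<Sum>s\<in>F. v s * a s) = ?V * (\<Sum>s\<in>F. v s / ?V * a s)"
    using assms(3) by (simp add: sum_distrib_left)
  also have "\<dots> \<le> ?V * c"
    using \<open>(\<Sum>s\<in>F. v s / ?V * a s) \<le> c\<close> assms(3) by (intro mult_left_mono) auto
  finally show ?thesis
    using \<open>a \<in> A\<close> by (intro bexI[of _ a]) (simp_all add: mult.commute)
qed

lemma average_le_of_exp_potential:
  fixes x \<eta> c \<delta> N :: real and K :: nat
  assumes \<eta>: "0 < \<eta>" "\<eta> \<le> 1" "c * \<eta> \<le> \<delta> / 2" and "0 \<le> c" "1 \<le> N" "K > 0"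
    and K: "ln N / (\<eta> * K) \<le> \<delta> / 2" and potential: "exp (\<eta> * x) \<le> N * exp (K * ((exp \<eta> - 1) * c))"
  shows "x / K \<le> c + \<delta>"
proof -
  define \<beta> where "\<beta> = exp \<eta> - 1"
  have "\<beta> / \<eta> \<le> 1 + \<eta>"
    using exp_bound[of \<eta>] \<eta> by (simp add: \<beta>_def divide_le_eq power2_eq_square algebra_simps)
  have "ln (exp (\<eta> * x)) \<le> ln (N * exp (K * (\<beta> * c)))"
    using potential \<open>1 \<le> N\<close> by (subst ln_le_cancel_iff) (auto simp: \<beta>_def)
  then have "\<eta> * x \<le> ln N + K * (\<beta> * c)"
    using \<open>1 \<le> N\<close> by (simp add: ln_mult)
  have "x / K = (\<eta> * x) / (\<eta> * K)"
    using \<eta>(1) by simp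
  also have "\<dots> \<le> (ln N + K * (\<beta> * c)) / (\<eta> * K)"
    using \<open>\<eta> * x \<le> ln N + K * (\<beta> * c)\<close> \<eta>(1) \<open>K > 0\<close> by (intro divide_right_mono) auto
  also have "\<dots> = ln N / (\<eta> * K) + c * (\<beta> / \<eta>)"
    using \<eta>(1) \<open>K > 0\<close> by (simp add: field_simps)
  also have "\<dots> \<le> ln N / (\<eta> * K) + c * (1 + \<eta>)"
    using mult_left_mono[OF \<open>\<beta> / \<eta> \<le> 1 + \<eta>\<close> \<open>0 \<le> c\<close>] by simp
  finally have "x / K \<le> ln N / (\<eta> * K) + c * (1 + \<eta>)" .
  moreover have "c * (1 + \<eta>) = c + c * \<eta>"
    by (simp add: algebra_simps)
  ultimately show ?thesis
    using K \<eta>(3) by linarith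
qed

(* Each round answers the exponential weights of the accumulated payoffs L; the potential
   \<Sum>s. exp (\<eta> L s) grows by at most the factor exp ((e^\<eta> - 1) c) per round and dominates every
   exp (\<eta> L s), which bounds the average payoff by c + \<delta> for suitable \<eta> and K. *)
lemma multiplicative_weights:
  fixes F :: "'a set" and A :: "('a \<Rightarrow> real) set" and c \<delta> :: real
  assumes F: "finite F" "F \<noteq> {}"
    and A: "\<And>a s. a \<in> A \<Longrightarrow> s \<in> F \<Longrightarrow> 0 \<le> a s \<and> a s \<le> 1"
    and response: "\<And>w. (\<forall>s\<in>F. 0 \<le> w s) \<Longrightarrow> (\<Sum>s\<in>F. w s) = 1 \<Longrightarrow> \<exists>a\<in>A. (\<Sum>s\<in>F. w s * a s) \<le> c"
    and "0 \<le> c" "0 < \<delta>"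
  obtains K :: nat and as where "K > 0" "\<And>k. k < K \<Longrightarrow> as k \<in> A"
    "\<And>s. s \<in> F \<Longrightarrow> (\<Sum>k<K. as k s) / K \<le> c + \<delta>"
proof -
  define N where "N = real (card F)"
  have "1 \<le> N"
    using F by (simp add: N_def Suc_le_eq card_gt_0_iff)
  define \<eta> where "\<eta> = min 1 (\<delta> / (2 * (c + 1)))"
  have \<eta>: "0 < \<eta>" "\<eta> \<le> 1" "c * \<eta> \<le> \<delta> / 2"
    using \<open>0 < \<delta>\<close> \<open>0 \<le> c\<close> by (auto simp: \<eta>_def min_def field_simps)
  have "\<exists>a\<in>A. (\<Sum>s\<in>F. exp (\<eta> * L s) * a s) \<le> c * (\<Sum>s\<in>F. exp (\<eta> * L s))" for L
    by (rule response_to_unnormalised_weights[OF response]) (use F in \<open>auto intro: sum_pos\<close>)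
  then have "\<forall>L. \<exists>a. a \<in> A \<and> (\<Sum>s\<in>F. exp (\<eta> * L s) * a s) \<le> c * (\<Sum>s\<in>F. exp (\<eta> * L s))"
    by blast
  from choice[OF this] obtain sel where sel: "\<And>L. sel L \<in> A"
    "\<And>L. (\<Sum>s\<in>F. exp (\<eta> * L s) * sel L s) \<le> c * (\<Sum>s\<in>F. exp (\<eta> * L s))"
    by blast
  define L where "L = rec_nat (\<lambda>_. 0) (\<lambda>_ L s. L s + sel L s)"
  define as where "as k = sel (L k)" for k
  have L_eq: "L k s = (\<Sum>j<k. as j s)" for k s
    by (induction k) (simp_all add: L_def as_def)
  have potential: "(\<Sum>s\<in>F. exp (\<eta> * L k s)) \<le> N * exp (k * ((exp \<eta> - 1) * c))" for k
    unfolding L_def N_def using F(1) \<eta>(1) A sel by (intro exp_potential_iterate) auto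
  obtain K :: nat where K: "2 * ln N / (\<eta> * \<delta>) < K"
    using reals_Archimedean2 by blast
  have "0 \<le> 2 * ln N / (\<eta> * \<delta>)"
    using \<open>1 \<le> N\<close> \<eta>(1) \<open>0 < \<delta>\<close> by simp
  then have "K > 0"
    using K by linarith
  have "2 * ln N \<le> K * (\<eta> * \<delta>)"
    using K \<eta>(1) \<open>0 < \<delta>\<close> by (simp add: divide_less_eq)
  then have K_bound: "ln N / (\<eta> * K) \<le> \<delta> / 2"
    using \<eta>(1) \<open>0 < \<delta>\<close> \<open>K > 0\<close> by (simp add: divide_le_eq field_simps)
  have "L K s / K \<le> c + \<delta>" if "s \<in> F" for s
  proof (rule average_le_of_exp_potential[OF \<eta> \<open>0 \<le> c\<close> \<open>1 \<le> N\<close> \<open>K > 0\<close> K_bound])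
    show "exp (\<eta> * L K s) \<le> N * exp (K * ((exp \<eta> - 1) * c))"
      using member_le_sum[of s F "\<lambda>s. exp (\<eta> * L K s)"] F that potential[of K] by simp
  qed
  then show ?thesis
    using that[of K as] \<open>K > 0\<close> sel(1) by (simp add: as_def L_eq)
qed

section \<open>The minimax theorem\<close>

lemma exists_response_to_finite_mixture:
  assumes F: "finite F" "F \<subseteq> S" and "T \<noteq> {}" and w: "\<forall>s\<in>F. 0 \<le> w s" "(\<Sum>s\<in>F. w s) = 1"
    and below: "\<And>p. p \<in> Delta S \<Longrightarrow> (INF q\<in>Delta T. pi_mix S T \<pi> p q) < c"
  shows "\<exists>q\<in>Delta T. (\<Sum>s\<in>F. w s * win_prob \<pi> q s) < c"
proof -
  obtain P where P: "set_pmf P \<subseteq> F" "\<And>s. s \<in> F \<Longrightarrow> pmf P s = w s"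
    using exists_pmf_with_weights[OF F(1), of w] w by blast
  have "P \<in> Delta S"
    using P(1) F(2) by (auto simp: Delta_def)
  then obtain q where q: "q \<in> Delta T" "pi_mix S T \<pi> P q < c"
    using below[OF \<open>P \<in> Delta S\<close>] cINF_less_iff[OF Delta_nonempty[OF \<open>T \<noteq> {}\<close>] pi_mix_bdd_below]
    by blast
  have "pi_mix S T \<pi> P q = (\<Sum>s\<in>F. pmf P s * win_prob \<pi> q s)"
    by (rule pi_mix_finite_support[OF \<open>P \<in> Delta S\<close> q(1) F(1) P(1)])
  also have "\<dots> = (\<Sum>s\<in>F. w s * win_prob \<pi> q s)"
    using P(2) by (intro sum.cong) auto
  finally show ?thesis
    using q by auto
qed

lemma exists_strategy_near_value_on_finite:
  fixes F :: "'a set" and W \<delta> :: real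
  assumes F: "finite F" "F \<noteq> {}" "F \<subseteq> S" and "T \<noteq> {}" "0 \<le> W" "0 < \<delta>"
    and W: "\<And>p. p \<in> Delta S \<Longrightarrow> (INF q\<in>Delta T. pi_mix S T \<pi> p q) \<le> W"
  obtains Q where "Q \<in> Delta T" "\<And>s. s \<in> F \<Longrightarrow> win_prob \<pi> Q s \<le> W + \<delta>"
proof -
  have response: "\<exists>a\<in>win_prob \<pi> ` Delta T. (\<Sum>s\<in>F. w s * a s) \<le> W + \<delta> / 2"
    if w: "\<forall>s\<in>F. 0 \<le> w s" "(\<Sum>s\<in>F. w s) = 1" for w
  proof -
    have "(INF q\<in>Delta T. pi_mix S T \<pi> p q) < W + \<delta> / 2" if "p \<in> Delta S" for p
      using W[OF that] \<open>0 < \<delta>\<close> by simp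
    then obtain q where "q \<in> Delta T" "(\<Sum>s\<in>F. w s * win_prob \<pi> q s) < W + \<delta> / 2"
      using exists_response_to_finite_mixture[OF F(1,3) \<open>T \<noteq> {}\<close> w] by blast
    then show ?thesis
      by (intro bexI[of _ "win_prob \<pi> q"]) auto
  qed
  obtain K :: nat and as where K: "K > 0" "\<And>k. k < K \<Longrightarrow> as k \<in> win_prob \<pi> ` Delta T"
    and avg: "\<And>s. s \<in> F \<Longrightarrow> (\<Sum>k<K. as k s) / K \<le> W + \<delta> / 2 + \<delta> / 2"
  proof (rule multiplicative_weights[where A = "win_prob \<pi> ` Delta T" and \<delta> = "\<delta> / 2",
                                     OF F(1,2) _ response])
    show "\<And>a s. a \<in> win_prob \<pi> ` Delta T \<Longrightarrow> s \<in> F \<Longrightarrow> 0 \<le> a s \<and> a s \<le> 1"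
      by (auto simp: win_prob_nonneg win_prob_le_1)
  qed (use \<open>0 \<le> W\<close> \<open>0 < \<delta>\<close> that in auto)
  have "\<forall>k. \<exists>q. k < K \<longrightarrow> q \<in> Delta T \<and> as k = win_prob \<pi> q"
    using K(2) by blast
  from choice[OF this] obtain qs where qs: "\<And>k. k < K \<Longrightarrow> qs k \<in> Delta T \<and> as k = win_prob \<pi> (qs k)"
    by blast
  show ?thesis
  proof
    show "bind_pmf (pmf_of_set {..<K}) qs \<in> Delta T"
      using K(1) qs by (auto simp: Delta_def set_bind_pmf lessThan_empty_iff)
    fix s assume "s \<in> F"
    have "win_prob \<pi> (bind_pmf (pmf_of_set {..<K}) qs) s = (\<Sum>k<K. as k s) / K"
      using qs by (simp add: win_prob_uniform_mixture[OF K(1)])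
    then show "win_prob \<pi> (bind_pmf (pmf_of_set {..<K}) qs) s \<le> W + \<delta>"
      using avg[OF \<open>s \<in> F\<close>] by simp
  qed
qed

lemma exists_strategy_le_lower_value:
  assumes S: "countable S" "S \<noteq> {}" and T: "countable T" "T \<noteq> {}"
    and auc: "ascending_union_closed (B2_down S T \<pi>)" and "0 \<le> W"
    and W: "\<And>p. p \<in> Delta S \<Longrightarrow> (INF q\<in>Delta T. pi_mix S T \<pi> p q) \<le> W"
  obtains q0 where "q0 \<in> Delta T" "\<And>s. s \<in> S \<Longrightarrow> win_prob \<pi> q0 s \<le> W"
proof -
  define e where "e = from_nat_into S"
  have e: "e ` {..n} \<subseteq> S" for n
    using range_from_nat_into_subset[OF S(2)] by (auto simp: e_def)
  have "\<exists>Q. Q \<in> Delta T \<and> (\<forall>s\<in>e ` {..n}. win_prob \<pi> Q s \<le> W + inverse (real (Suc n)))" for n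
  proof -
    obtain Q where "Q \<in> Delta T" "\<And>s. s \<in> e ` {..n} \<Longrightarrow> win_prob \<pi> Q s \<le> W + inverse (real (Suc n))"
      by (rule exists_strategy_near_value_on_finite[OF _ _ e T(2) \<open>0 \<le> W\<close> _ W]) auto
    then show ?thesis
      by blast
  qed
  then have "\<forall>n. \<exists>Q. Q \<in> Delta T \<and> (\<forall>s\<in>e ` {..n}. win_prob \<pi> Q s \<le> W + inverse (real (Suc n)))"
    by blast
  from choice[OF this] obtain Qs where Qs: "\<And>n. Qs n \<in> Delta T"
    "\<And>n s. s \<in> e ` {..n} \<Longrightarrow> win_prob \<pi> (Qs n) s \<le> W + inverse (real (Suc n))"
    by blast
  obtain q0 r where q0: "q0 \<in> Delta T" and r: "strict_mono r"
    and lim: "\<And>s \<epsilon>. s \<in> S \<Longrightarrow> \<epsilon> > 0 \<Longrightarrow>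
                eventually (\<lambda>n. win_prob \<pi> q0 s \<le> win_prob \<pi> (Qs (r n)) s + \<epsilon>) sequentially"
    using exists_lower_limit_strategy[where qs = Qs, OF S(1) T(1) auc Qs(1)] by blast
  show ?thesis
  proof (rule that[OF q0])
    fix s assume "s \<in> S"
    then obtain j where j: "s = e j"
      using subset_range_from_nat_into[OF S(1)] by (auto simp: e_def)
    show "win_prob \<pi> q0 s \<le> W"
      by (rule le_of_eventually_le_subseq[where y = "\<lambda>m. win_prob \<pi> (Qs m) s" and j = j,
                                          OF r lim[OF \<open>s \<in> S\<close>]])
         (use Qs(2) j in auto)
  qed
qed

lemma pi_mix_minimax:
  assumes S: "countable S" "S \<noteq> {}" and T: "countable T" "T \<noteq> {}"
    and auc: "ascending_union_closed (B2_down S T \<pi>)"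
  shows "\<exists>q0\<in>Delta T.
           (SUP p\<in>Delta S. pi_mix S T \<pi> p q0) = (INF q\<in>Delta T. SUP p\<in>Delta S. pi_mix S T \<pi> p q) \<and>
           (SUP p\<in>Delta S. INF q\<in>Delta T. pi_mix S T \<pi> p q) = (INF q\<in>Delta T. SUP p\<in>Delta S. pi_mix S T \<pi> p q)"
proof -
  let ?V = "pi_mix S T \<pi>"
  define W where "W = (SUP p\<in>Delta S. INF q\<in>Delta T. ?V p q)"
  define U where "U q = (SUP p\<in>Delta S. ?V p q)" for q
  have lower_le_V: "(INF q'\<in>Delta T. ?V p q') \<le> ?V p q" if "p \<in> Delta S" "q \<in> Delta T" for p q
    by (rule cINF_lower[OF pi_mix_bdd_below that(2)]) fact
  obtain q1 where q1: "q1 \<in> Delta T"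
    using Delta_nonempty[OF T(2)] by blast
  have "(INF q\<in>Delta T. ?V p q) \<le> 1" if "p \<in> Delta S" for p
    using lower_le_V[OF that q1] pi_mix_le_1[OF that q1, of \<pi>] by linarith
  then have "bdd_above ((\<lambda>p. INF q\<in>Delta T. ?V p q) ` Delta S)"
    by (intro bdd_aboveI[of _ 1]) auto
  then have le_W: "(INF q\<in>Delta T. ?V p q) \<le> W" if "p \<in> Delta S" for p
    unfolding W_def by (rule cSUP_upper[OF that])
  obtain p1 where p1: "p1 \<in> Delta S"
    using Delta_nonempty[OF S(2)] by blast
  have "0 \<le> (INF q\<in>Delta T. ?V p1 q)"
    by (rule cINF_greatest[OF Delta_nonempty[OF T(2)] pi_mix_nonneg[OF p1]])
  then have "0 \<le> W"
    using le_W[OF p1] by linarith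
  have W_le_U: "W \<le> U q" if "q \<in> Delta T" for q
    unfolding W_def U_def using lower_le_V that
    by (intro cSUP_mono[OF Delta_nonempty[OF S(2)] pi_mix_bdd_above[OF that]]) blast
  obtain q0 where q0: "q0 \<in> Delta T" "\<And>s. s \<in> S \<Longrightarrow> win_prob \<pi> q0 s \<le> W"
    using exists_strategy_le_lower_value[OF S T auc \<open>0 \<le> W\<close> le_W] by blast
  have "?V p q0 \<le> W" if "p \<in> Delta S" for p
    unfolding pi_mix_eq_expectation[OF that q0(1)]
    using that q0(2) by (intro measure_pmf.integral_le_const integrable_win_prob)
      (auto simp: Delta_def AE_measure_pmf_iff)
  then have "U q0 \<le> W"
    unfolding U_def by (intro cSUP_least[OF Delta_nonempty[OF S(2)]])
  moreover have "bdd_below (U ` Delta T)"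
    using W_le_U by (intro bdd_belowI[of _ W]) auto
  then have "(INF q\<in>Delta T. U q) \<le> U q0"
    by (rule cINF_lower[OF _ q0(1)])
  moreover have "W \<le> (INF q\<in>Delta T. U q)"
    by (rule cINF_greatest[OF Delta_nonempty[OF T(2)] W_le_U])
  ultimately show ?thesis
    using q0(1) unfolding W_def U_def by (intro bexI[of _ q0]) auto
qed

theorem theorem2p11:
  fixes S :: "'a set" and T :: "'b set" and \<pi> :: "'a \<Rightarrow> 'b \<Rightarrow> bool"
  assumes "countable S" "infinite S" "countable T" "infinite T"
    and "ascending_union_closed (B2_down S T \<pi>)"
  shows "(\<forall>p\<in>Delta S. \<exists>q0\<in>Delta T.
            pi_mix S T \<pi> p q0 = (INF q\<in>Delta T. pi_mix S T \<pi> p q))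
       \<and> (\<exists>q0\<in>Delta T. (SUP p\<in>Delta S. pi_mix S T \<pi> p q0)
            = (INF q\<in>Delta T. SUP p\<in>Delta S. pi_mix S T \<pi> p q))
       \<and> (SUP p\<in>Delta S. INF q\<in>Delta T. pi_mix S T \<pi> p q)
            = (INF q\<in>Delta T. SUP p\<in>Delta S. pi_mix S T \<pi> p q)"
proof -
  have "S \<noteq> {}" "T \<noteq> {}"
    using assms(2,4) by auto
  then show ?thesis
    using pi_mix_INF_attained[OF assms(1,3) \<open>T \<noteq> {}\<close> assms(5)]
      pi_mix_minimax[OF assms(1) \<open>S \<noteq> {}\<close> assms(3) \<open>T \<noteq> {}\<close> assms(5)]
    by blast
qed

end
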